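(* Let $E$ be a real Hilbert space, $C\subseteq E$ nonempty closed convex, $\rho=\sup_{x,y\in C}\lVert x-y\rVert\in[0,+\infty]$, $a\in C$, and $\widehat{x}_t^*\in E$ arbitrary predictions. For all $z\in C$: (i) If $\eta_1\geqslant\dots\geqslant\eta_{T+1}>0$ and the learner plays $\widetilde{x}_t=P_C\big(a-\eta_t\sum_{i=1}^{t-1}x_i^*\big)$, $x_t=P_C\big(\widetilde{x}_t-\eta_t\widehat{x}_t^*\big)$, then \[\mathrm{Regret}(z,\dots,z)\leqslant\frac1{2\eta_{T+1}}\lVert z-a\rVert^2+\sum_{t=1}^T\frac1{\eta_t}Q_\rho^\star\big(\eta_t\lVert x_t^*-\widehat{x}_t^*\rVert\big)-\sum_{t=1}^T\frac1{2\eta_t}\lVert x_t-\widetilde{x}_t\rVert^2,\] and also $\mathrm{Regret}(z,\dots,z)\leqslant\frac1{2\eta_{T+1}}\lVert z-a\rVert^2+\sum_{t=1}^T\frac1{\eta_t}\Phi_{\eta_t}(x_t^*,\widehat{x}_t^* )-\sum_{t=1}^T\frac1{2\eta_t}\lVert y_t-\widetilde{x}_t\rVert^2$ with $y_t=P_C(\widetilde{x}_t-\eta_t\widehat{y}_t^* )$. (ii) If $0<\theta_1\leqslant\dots\leqslant\theta_T$ and the learner plays $\widetilde{x}_t=P_C\big(a-\sum_{i=1}^{t-1}\theta_ix_i^*\big)$, $x_t=P_C\big(\widetilde{x}_t-\theta_t\widehat{x}_t^*\big)$, then \[\mathrm{Regret}(z,\dots,z)\leqslant\frac1{2\theta_1}\lVert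 z-a\rVert^2+\sum_{t=1}^T\frac1{\theta_t}Q_\rho^\star\big(\theta_t\lVert x_t^*-\widehat{x}_t^*\rVert\big)-\sum_{t=1}^T\frac1{2\theta_t}\lVert x_t-\widetilde{x}_t\rVert^2,\] and also $\mathrm{Regret}(z,\dots,z)\leqslant\frac1{2\theta_1}\lVert z-a\rVert^2+\sum_{t=1}^T\frac1{\theta_t}\Phi_{\theta_t}(x_t^*,\widehat{x}_t^* )-\sum_{t=1}^T\frac1{2\theta_t}\lVert y_t-\widetilde{x}_t\rVert^2$ with $y_t=P_C(\widetilde{x}_t-\theta_t\widehat{y}_t^* )$.
   Context: $P_C$ is the metric projection onto $C$. Protocol: at rounds $t=1,\dots,T$ the learner plays $x_t\in C$, the adversary reveals a proper $\varphi_t\colon E\to(-\infty,+\infty]$ with $C\subseteq\operatorname{dom}\partial\varphi_t$, and $x_t^*\in\partial\varphi_t(x_t)$ ($E$ identified with its dual). $\mathrm{Regret}(z,\dots,z)=\sum_t\varphi_t(x_t)-\sum_t\varphi_t(z)$. $Q_\rho^\star(\varkappa)=\frac12\varkappa^2-\frac12(\lvert\varkappa\rvert-\rho)_+^2$ (with $Q_\infty^\star(\varkappa)=\frac12\varkappa^2$), $x_+=\max\{x,0\}$. $\widehat{y}_t^*=\lambda\widehat{x}_t^*+(1-\lambda)x_t^*$, $\lambda=\min\{\lVert x_t^*\rVert/\lVert x_t^*-\widehat{x}_t^*\rVert,1\}$ (any $\lambda$ if $x_t^*=\widehat{x}_t^*$). For $\xi>0$: $\Phi_\xi(x^*,\widehat{x}^*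 )=Q_\rho^\star\big(\xi\min\{\lVert x^*-\widehat{x}^*\rVert,\lVert x^*\rVert\}\big)+\xi\lVert x^*\rVert\min\{\xi(\lVert x^*-\widehat{x}^*\rVert-\lVert x^*\rVert)_+,\rho\}$. *)

theory Defs
  imports "HOL-Analysis.Analysis"
begin

(* Metric projection onto C (well defined for nonempty closed convex C in a Hilbert space). *)
definition metric_proj :: "'a::real_inner set \<Rightarrow> 'a \<Rightarrow> 'a" where
  "metric_proj C x = (SOME p. p \<in> C \<and> (\<forall>y\<in>C. norm (x - p) \<le> norm (x - y)))"

definition proper_fun :: "('a \<Rightarrow> ereal) \<Rightarrow> bool" where
  "proper_fun f \<longleftrightarrow> (\<forall>x. f x \<noteq> -\<infinity>) \<and> (\<exists>x. f x \<noteq> \<infinity>)"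

(* subdifferential (E identified with its dual) *)
definition subdiff :: "('a::real_inner \<Rightarrow> ereal) \<Rightarrow> 'a \<Rightarrow> 'a set" where
  "subdiff f x = {s. \<bar>f x\<bar> \<noteq> \<infinity> \<and> (\<forall>y. f x + ereal (s \<bullet> (y - x)) \<le> f y)}"

definition diam_e :: "'a::metric_space set \<Rightarrow> ereal" where
  "diam_e C = Sup {ereal (dist x y) | x y. x \<in> C \<and> y \<in> C}"

definition pos_part :: "real \<Rightarrow> real" where
  "pos_part x = max x 0"

definition Qstar :: "ereal \<Rightarrow> real \<Rightarrow> real" where
  "Qstar \<rho> k = (if \<rho> = \<infinity> then k\<^sup>2 / 2
                 else k\<^sup>2 / 2 - (pos_part (\<bar>k\<bar> - real_of_ereal \<rho>))\<^sup>2 / 2)"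

definition min_rho :: "real \<Rightarrow> ereal \<Rightarrow> real" where
  "min_rho r \<rho> = (if \<rho> = \<infinity> then r else min r (real_of_ereal \<rho>))"

definition Phi :: "ereal \<Rightarrow> real \<Rightarrow> 'a::real_normed_vector \<Rightarrow> 'a \<Rightarrow> real" where
  "Phi \<rho> \<xi> xs xh =
     Qstar \<rho> (\<xi> * min (norm (xs - xh)) (norm xs))
     + \<xi> * norm xs * min_rho (\<xi> * pos_part (norm (xs - xh) - norm xs)) \<rho>"

(* hat y^* = lambda hat x^* + (1 - lambda) x^*; when x^* = hat x^* the choice of lambda is irrelevant
   (here division by zero gives lambda = 0) *)
definition yhat :: "'a::real_normed_vector \<Rightarrow> 'a \<Rightarrow> 'a" where
  "yhat xs xh = (let l = min (norm xs / norm (xs - xh)) 1 in l *\<^sub>R xh + (1 - l) *\<^sub>R xs)"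

definition regret :: "nat \<Rightarrow> (nat \<Rightarrow> 'a \<Rightarrow> ereal) \<Rightarrow> (nat \<Rightarrow> 'a) \<Rightarrow> 'a \<Rightarrow> real" where
  "regret T \<phi> x z = (\<Sum>t=1..T. real_of_ereal (\<phi> t (x t))) - (\<Sum>t=1..T. real_of_ereal (\<phi> t z))"

end

(*
  Lazy projection is analysed through the potentials
    F_t(y) = <G_t, y> + |y - a|^2 / (2 eta_t),   G_t = x*_1 + ... + x*_(t-1),
  whose minimiser over C is the point ~x_t. The variational inequality of P_C makes F_t grow
  quadratically away from ~x_t (three-point inequality); as eta_t does not increase, the minimal
  potentials then telescope, and the linearised regret is bounded as soon as every round satisfies
    <x*_t, x_t - w> - |w - ~x_t|^2 / (2 eta_t) <= delta_t   for all w in C.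
  For the optimistic step x_t = P_C(~x_t - eta_t ^x*_t), the three-point inequality at ~x_t takes
  care of the hint, and the prediction error <x*_t - ^x*_t, x_t - w> is absorbed by the spare
  quadratic term: Q*_rho(k) is the maximum of k d - d^2/2 over 0 <= d <= rho, and
  |x_t - w| <= rho. The Phi bound compares x_t with y_t, the step for the hint ^y*_t, using that
  P_C is nonexpansive. For increasing weights theta_t, the unit-rate bound for the gradients
  theta_t x*_t on every prefix is turned into the claim by Abel summation against the
  nonincreasing factors 1/theta_t. Convexity bounds the regret by the linearised regret.
*)

theory Submission
  imports Defs
begin

lemma Qstar_ge:
  assumes "0 \<le> k" "0 \<le> d" "ereal d \<le> \<rho>"
  shows "k * d - d\<^sup>2 / 2 \<le> Qstar \<rho> k"
proof (cases \<rho>)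
  case (real r)
  show ?thesis
  proof (cases "k \<le> r")
    case True
    then have "pos_part (\<bar>k\<bar> - r) = 0"
      using assms(1) by (simp add: pos_part_def)
    then show ?thesis
      using real sum_squares_ge_zero[of "k - d" 0] by (simp add: Qstar_def power2_eq_square algebra_simps)
  next
    case False
    have "0 \<le> (r - d) * (k - (r + d) / 2)"
      using False assms(3) real by (intro mult_nonneg_nonneg) auto
    moreover have "pos_part (\<bar>k\<bar> - r) = k - r"
      using False assms(1) by (simp add: pos_part_def)
    then have "Qstar \<rho> k = k * r - r\<^sup>2 / 2"
      unfolding Qstar_def real by (simp only: ereal.distinct if_False real_of_ereal.simps) (simp add: power2_eq_square field_simps)
    ultimately show ?thesis
      by (simp add: power2_eq_square field_simps)
  qed
qed (use assms sum_squares_ge_zero[of "k - d" 0] in \<open>auto simp: Qstar_def power2_eq_square algebra_simps\<close>)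

lemma le_min_rho: "s \<le> r \<Longrightarrow> ereal s \<le> \<rho> \<Longrightarrow> s \<le> min_rho r \<rho>"
  by (cases \<rho>) (auto simp: min_rho_def)

lemma dist_le_diam_e: "x \<in> C \<Longrightarrow> y \<in> C \<Longrightarrow> ereal (dist x y) \<le> diam_e C"
  unfolding diam_e_def by (rule Sup_upper) blast

lemma norm_diff_yhat:
  fixes g h :: "'a::real_normed_vector"
  shows "norm (g - yhat g h) = min (norm (g - h)) (norm g)"
    and "norm (h - yhat g h) = pos_part (norm (g - h) - norm g)"
proof -
  define l where "l = min (norm g / norm (g - h)) 1"
  have yhat: "yhat g h = l *\<^sub>R h + (1 - l) *\<^sub>R g"
    unfolding yhat_def l_def Let_def by simp
  have "norm (g - yhat g h) = l * norm (g - h) \<and> norm (h - yhat g h) = (1 - l) * norm (g - h)"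
  proof (cases "g = h")
    case False
    then have "0 \<le> l" "l \<le> 1"
      by (auto simp: l_def)
    moreover have "g - yhat g h = l *\<^sub>R (g - h)" "h - yhat g h = (1 - l) *\<^sub>R (h - g)"
      unfolding yhat by (simp_all add: algebra_simps)
    ultimately show ?thesis
      by (simp add: norm_minus_commute)
  qed (simp add: yhat_def Let_def algebra_simps)
  moreover have "l * norm (g - h) = min (norm (g - h)) (norm g)"
    "(1 - l) * norm (g - h) = pos_part (norm (g - h) - norm g)"
    by (cases "g = h"; auto simp: l_def pos_part_def min_def max_def field_simps)+
  ultimately show "norm (g - yhat g h) = min (norm (g - h)) (norm g)"
    and "norm (h - yhat g h) = pos_part (norm (g - h) - norm g)"
    by simp_all
qed

lemma mono_on_interval_of_Suc:
  fixes f :: "nat \<Rightarrow> 'b::preorder"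
  assumes "\<And>k. m \<le> k \<Longrightarrow> k < n \<Longrightarrow> f k \<le> f (Suc k)" "m \<le> i" "i \<le> j" "j \<le> n"
  shows "f i \<le> f j"
  using assms(3,4)
proof (induction rule: dec_induct)
  case (step k)
  then show ?case
    using assms(1)[of k] assms(2) order_trans by fastforce
qed simp

lemma weighted_sum_le_of_prefix_sums_le:
  fixes b c :: "nat \<Rightarrow> real"
  assumes antimono: "\<And>t. 1 \<le> t \<Longrightarrow> t < T \<Longrightarrow> c (Suc t) \<le> c t"
    and nonneg: "\<And>t. 1 \<le> t \<Longrightarrow> t \<le> T \<Longrightarrow> 0 \<le> c t" "0 \<le> c 1" "0 \<le> D"
    and prefix: "\<And>s. 1 \<le> s \<Longrightarrow> s \<le> T \<Longrightarrow> (\<Sum>t=1..s. b t) \<le> D"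
  shows "(\<Sum>t=1..T. c t * b t) \<le> c 1 * D"
proof (cases "T = 0")
  case False
  have partial: "(\<Sum>t=1..s. c t * b t) \<le> c s * (\<Sum>t=1..s. b t) + (c 1 - c s) * D"
    if "1 \<le> s" "s \<le> T" for s
    using that
  proof (induction rule: dec_induct)
    case (step s)
    have "0 \<le> (c s - c (Suc s)) * (D - (\<Sum>t=1..s. b t))"
      using antimono[of s] prefix[of s] step by (intro mult_nonneg_nonneg) auto
    then show ?case
      using step by (simp add: algebra_simps)
  qed simp
  have "c T * (\<Sum>t=1..T. b t) \<le> c T * D"
    using False nonneg(1)[of T] prefix[of T] by (intro mult_left_mono) auto
  then show ?thesis
    using False partial[of T] by (simp add: algebra_simps)
qed (use nonneg in simp)

lemma subgradient_le:
  assumes "s \<in> subdiff f x" "subdiff f z \<noteq> {}"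
  shows "real_of_ereal (f x) - real_of_ereal (f z) \<le> s \<bullet> (x - z)"
proof -
  have "\<bar>f x\<bar> \<noteq> \<infinity>" "\<bar>f z\<bar> \<noteq> \<infinity>" "f x + ereal (s \<bullet> (z - x)) \<le> f z"
    using assms by (auto simp: subdiff_def)
  then show ?thesis
    by (cases "f x"; cases "f z") (auto simp: inner_diff_right)
qed

lemma regret_le_linearized:
  assumes "\<forall>t\<in>{1..T}. g t \<in> subdiff (\<phi> t) (x t)" "\<forall>t\<in>{1..T}. subdiff (\<phi> t) z \<noteq> {}"
  shows "regret T \<phi> x z \<le> (\<Sum>t=1..T. g t \<bullet> (x t - z))"
  unfolding regret_def sum_subtractf[symmetric] using assms by (intro sum_mono subgradient_le) auto

lemma rate_ge_last:
  fixes \<eta> :: "nat \<Rightarrow> real"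
  assumes "\<forall>t\<in>{1..T}. \<eta> (Suc t) \<le> \<eta> t" "1 \<le> t" "t \<le> T + 1"
  shows "\<eta> (T + 1) \<le> \<eta> t"
  using mono_on_interval_of_Suc[of 1 "T + 1" "\<lambda>t. - \<eta> t" t "T + 1"] assms by auto

lemma weight_ge_first:
  fixes \<theta> :: "nat \<Rightarrow> real"
  assumes "\<forall>t\<in>{1..<T}. \<theta> t \<le> \<theta> (Suc t)" "1 \<le> t" "t \<le> T"
  shows "\<theta> 1 \<le> \<theta> t"
  using mono_on_interval_of_Suc[of 1 T \<theta> 1 t] assms by auto

context
  fixes C :: "'a::{real_inner,complete_space} set"
  assumes C: "closed C" "convex C" "C \<noteq> {}"
begin

lemma complete_closest_point_exists: "\<exists>p\<in>C. \<forall>y\<in>C. dist x p \<le> dist x y"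
proof -
  define d where "d = infdist x C"
  have d_le: "d \<le> dist x y" if "y \<in> C" for y
    using infdist_le[OF that] by (simp add: d_def)
  have "d \<in> closure ((\<lambda>y. dist x y) ` C)"
    unfolding d_def infdist_notempty[OF C(3)]
    using C(3) by (intro closure_contains_Inf) (auto intro: bdd_belowI2[of _ 0])
  then obtain s where s: "\<And>n. s n \<in> (\<lambda>y. dist x y) ` C" and lim_s: "s \<longlonglongrightarrow> d"
    unfolding closure_sequential by blast
  from s have "\<forall>n. \<exists>y. y \<in> C \<and> s n = dist x y" by blast
  then obtain y where y: "\<And>n. y n \<in> C" "\<And>n. s n = dist x (y n)" by metis
  have dist_y: "(\<lambda>n. dist x (y n)) \<longlonglongrightarrow> d"
    using lim_s by (simp add: y(2)[symmetric])
  have "Cauchy y"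
  proof (rule metric_CauchyI)
    fix r :: real assume "0 < r"
    have "(\<lambda>n. (dist x (y n))\<^sup>2) \<longlonglongrightarrow> d\<^sup>2"
      by (intro tendsto_intros dist_y)
    then have "\<forall>\<^sub>F n in sequentially. (dist x (y n))\<^sup>2 < d\<^sup>2 + r\<^sup>2 / 4"
      by (rule order_tendstoD(2)) (use \<open>0 < r\<close> in simp)
    then obtain M where M: "\<And>n. n \<ge> M \<Longrightarrow> (dist x (y n))\<^sup>2 < d\<^sup>2 + r\<^sup>2 / 4"
      unfolding eventually_sequentially by blast
    have "dist (y m) (y n) < r" if "m \<ge> M" "n \<ge> M" for m n
    proof -
      have "(1/2) *\<^sub>R y m + (1/2) *\<^sub>R y n \<in> C"
        using C(2) y by (intro convexD) auto
      then have "d\<^sup>2 \<le> (norm (x - ((1/2) *\<^sub>R y m + (1/2) *\<^sub>R y n)))\<^sup>2"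
        using d_le[of "(1/2) *\<^sub>R y m + (1/2) *\<^sub>R y n"] infdist_nonneg[of x C]
        by (intro power_mono) (auto simp: d_def dist_norm)
      moreover have "(norm (y m - y n))\<^sup>2 = 2 * (norm (x - y m))\<^sup>2 + 2 * (norm (x - y n))\<^sup>2
          - 4 * (norm (x - ((1/2) *\<^sub>R y m + (1/2) *\<^sub>R y n)))\<^sup>2"
        by (simp add: power2_norm_eq_inner inner_diff inner_add inner_commute algebra_simps)
      ultimately have "(norm (y m - y n))\<^sup>2 < r\<^sup>2"
        using M[OF \<open>m \<ge> M\<close>] M[OF \<open>n \<ge> M\<close>] unfolding dist_norm by linarith
      then show ?thesis using \<open>0 < r\<close> by (simp add: dist_norm power_less_imp_less_base)
    qed
    then show "\<exists>M. \<forall>m\<ge>M. \<forall>n\<ge>M. dist (y m) (y n) < r" by blast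
  qed
  then obtain p where p: "y \<longlonglongrightarrow> p" using Cauchy_convergent_iff convergent_def by blast
  have "p \<in> C" using closed_sequentially[OF C(1)] y p by blast
  moreover have "dist x p = d"
    using tendsto_unique[OF _ tendsto_dist[OF tendsto_const p] dist_y] by simp
  ultimately show ?thesis using d_le by blast
qed

lemma metric_proj_in: "metric_proj C x \<in> C"
  and metric_proj_le: "y \<in> C \<Longrightarrow> dist x (metric_proj C x) \<le> dist x y"
  using someI_ex[OF complete_closest_point_exists[unfolded Bex_def, of x]]
  by (auto simp: metric_proj_def dist_norm)

lemma metric_proj_inner_le: "y \<in> C \<Longrightarrow> (x - metric_proj C x) \<bullet> (y - metric_proj C x) \<le> 0"
  using any_closest_point_dot[OF C(2,1) metric_proj_in] metric_proj_le by blast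

lemma metric_proj_nonexpansive: "norm (metric_proj C u - metric_proj C v) \<le> norm (u - v)"
proof -
  let ?p = "metric_proj C u" and ?q = "metric_proj C v"
  have "(u - ?p) \<bullet> (?q - ?p) \<le> 0" "(v - ?q) \<bullet> (?p - ?q) \<le> 0"
    by (intro metric_proj_inner_le metric_proj_in)+
  then have "(norm (?p - ?q))\<^sup>2 \<le> (u - v) \<bullet> (?p - ?q)"
    by (simp add: power2_norm_eq_inner inner_diff inner_commute algebra_simps)
  also have "\<dots> \<le> norm (u - v) * norm (?p - ?q)"
    using Cauchy_Schwarz_ineq2 abs_ge_self order_trans by blast
  finally show ?thesis
    by (cases "?p = ?q") (auto simp: power2_eq_square)
qed

lemma metric_proj_three_point:
  fixes a g :: 'a
  assumes "0 < \<eta>" "w \<in> C"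
  defines "y \<equiv> metric_proj C (a - \<eta> *\<^sub>R g)"
  shows "g \<bullet> (y - w) \<le> ((norm (w - a))\<^sup>2 - (norm (y - a))\<^sup>2 - (norm (w - y))\<^sup>2) / (2 * \<eta>)"
proof -
  have "(a - \<eta> *\<^sub>R g - y) \<bullet> (w - y) \<le> 0"
    unfolding y_def using assms(2) by (rule metric_proj_inner_le)
  then have "2 * \<eta> * (g \<bullet> (y - w)) \<le> (norm (w - a))\<^sup>2 - (norm (y - a))\<^sup>2 - (norm (w - y))\<^sup>2"
    by (simp add: power2_norm_eq_inner inner_diff inner_commute algebra_simps)
  then show ?thesis
    using assms(1) by (simp add: field_simps)
qed

lemma optimistic_step_le_Qstar:
  fixes g h xt :: 'a
  assumes "0 < \<eta>" "w \<in> C"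
  defines "y \<equiv> metric_proj C (xt - \<eta> *\<^sub>R h)"
  shows "g \<bullet> (y - w) - (norm (w - xt))\<^sup>2 / (2 * \<eta>)
    \<le> Qstar (diam_e C) (\<eta> * norm (g - h)) / \<eta> - (norm (y - xt))\<^sup>2 / (2 * \<eta>)"
proof -
  let ?d = "norm (y - w)"
  have "h \<bullet> (y - w) \<le> ((norm (w - xt))\<^sup>2 - (norm (y - xt))\<^sup>2 - (norm (w - y))\<^sup>2) / (2 * \<eta>)"
    unfolding y_def using assms(1,2) by (rule metric_proj_three_point)
  also have "\<dots> = (norm (w - xt))\<^sup>2 / (2 * \<eta>) - (norm (y - xt))\<^sup>2 / (2 * \<eta>) - ?d\<^sup>2 / (2 * \<eta>)"
    by (simp add: diff_divide_distrib norm_minus_commute)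
  finally have h_part: "h \<bullet> (y - w) \<le> \<dots>" .
  have "(g - h) \<bullet> (y - w) \<le> norm (g - h) * ?d"
    using Cauchy_Schwarz_ineq2 abs_ge_self order_trans by blast
  moreover have "\<eta> * norm (g - h) * ?d - ?d\<^sup>2 / 2 \<le> Qstar (diam_e C) (\<eta> * norm (g - h))"
    using assms(1) dist_le_diam_e[OF _ assms(2)] metric_proj_in
    by (intro Qstar_ge) (auto simp: y_def dist_norm)
  then have "(\<eta> * norm (g - h) * ?d - ?d\<^sup>2 / 2) / \<eta> \<le> Qstar (diam_e C) (\<eta> * norm (g - h)) / \<eta>"
    using assms(1) by (intro divide_right_mono) auto
  then have "norm (g - h) * ?d - ?d\<^sup>2 / (2 * \<eta>) \<le> Qstar (diam_e C) (\<eta> * norm (g - h)) / \<eta>"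
    using assms(1) by (simp add: diff_divide_distrib)
  ultimately show ?thesis
    using h_part by (simp add: inner_diff_left)
qed

lemma optimistic_step_le_Phi:
  fixes g h xt :: 'a
  assumes "0 < \<eta>" "w \<in> C"
  defines "x \<equiv> metric_proj C (xt - \<eta> *\<^sub>R h)"
    and "y \<equiv> metric_proj C (xt - \<eta> *\<^sub>R yhat g h)"
  shows "g \<bullet> (x - w) - (norm (w - xt))\<^sup>2 / (2 * \<eta>)
    \<le> Phi (diam_e C) \<eta> g h / \<eta> - (norm (y - xt))\<^sup>2 / (2 * \<eta>)"
proof -
  define m where "m = min_rho (\<eta> * pos_part (norm (g - h) - norm g)) (diam_e C)"
  have "norm (x - y) \<le> m"
    unfolding m_def
  proof (rule le_min_rho)
    have "norm (x - y) \<le> norm ((xt - \<eta> *\<^sub>R h) - (xt - \<eta> *\<^sub>R yhat g h))"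
      unfolding x_def y_def by (rule metric_proj_nonexpansive)
    also have "\<dots> = \<eta> * norm (h - yhat g h)"
      using assms(1) by (simp add: scaleR_diff_right[symmetric] norm_minus_commute)
    finally show "norm (x - y) \<le> \<eta> * pos_part (norm (g - h) - norm g)"
      by (simp add: norm_diff_yhat)
    show "ereal (norm (x - y)) \<le> diam_e C"
      using dist_le_diam_e[OF metric_proj_in metric_proj_in] by (simp add: x_def y_def dist_norm)
  qed
  then have "g \<bullet> (x - y) \<le> norm g * m"
    using Cauchy_Schwarz_ineq2[of g "x - y"] mult_left_mono[of "norm (x - y)" m "norm g"] by simp
  moreover have "g \<bullet> (y - w) - (norm (w - xt))\<^sup>2 / (2 * \<eta>)
      \<le> Qstar (diam_e C) (\<eta> * min (norm (g - h)) (norm g)) / \<eta> - (norm (y - xt))\<^sup>2 / (2 * \<eta>)"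
    using optimistic_step_le_Qstar[OF assms(1,2), where g = g and h = "yhat g h" and xt = xt]
    by (simp add: y_def norm_diff_yhat)
  moreover have "Phi (diam_e C) \<eta> g h / \<eta> = Qstar (diam_e C) (\<eta> * min (norm (g - h)) (norm g)) / \<eta> + norm g * m"
    unfolding Phi_def m_def using assms(1) by (simp add: field_simps)
  ultimately show ?thesis
    by (simp add: inner_diff_right)
qed

lemma dual_averaging_linear_regret_le:
  fixes g x xt :: "nat \<Rightarrow> 'a" and \<eta> \<delta> :: "nat \<Rightarrow> real"
  assumes rates: "\<forall>t\<in>{1..T}. \<eta> (Suc t) \<le> \<eta> t" "0 < \<eta> (T + 1)"
    and xt: "\<forall>t\<in>{1..T}. xt t = metric_proj C (a - \<eta> t *\<^sub>R (\<Sum>i\<in>{1..<t}. g i))"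
    and step: "\<forall>t\<in>{1..T}. \<forall>w\<in>C. g t \<bullet> (x t - w) - (norm (w - xt t))\<^sup>2 / (2 * \<eta> t) \<le> \<delta> t"
    and "z \<in> C"
  shows "(\<Sum>t=1..T. g t \<bullet> (x t - z)) \<le> (norm (z - a))\<^sup>2 / (2 * \<eta> (T + 1)) + (\<Sum>t=1..T. \<delta> t)"
proof -
  define G where "G t = (\<Sum>i\<in>{1..<t}. g i)" for t
  define F where "F t y = G t \<bullet> y + (norm (y - a))\<^sup>2 / (2 * \<eta> t)" for t y
  define u where "u t = metric_proj C (a - \<eta> t *\<^sub>R G t)" for t
  note last_le = rate_ge_last[OF rates(1)]
  have growth: "F t (u t) + (norm (y - u t))\<^sup>2 / (2 * \<eta> t) \<le> F t y"
    if "1 \<le> t" "t \<le> T + 1" "y \<in> C" for t y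
  proof -
    have "0 < \<eta> t"
      using last_le[OF that(1,2)] rates(2) by linarith
    from metric_proj_three_point[OF this \<open>y \<in> C\<close>, where a = a and g = "G t"]
    show ?thesis
      by (simp add: F_def u_def inner_diff_right diff_divide_distrib norm_minus_commute)
  qed
  have potential_step: "g t \<bullet> x t - \<delta> t \<le> F (Suc t) (u (Suc t)) - F t (u t)" if "t \<in> {1..T}" for t
  proof -
    have "F t (u t) + (norm (u (Suc t) - u t))\<^sup>2 / (2 * \<eta> t) \<le> F t (u (Suc t))"
      using that by (intro growth) (auto simp: u_def metric_proj_in)
    moreover have "(norm (u (Suc t) - a))\<^sup>2 / (2 * \<eta> t) \<le> (norm (u (Suc t) - a))\<^sup>2 / (2 * \<eta> (Suc t))"
      using that rates last_le[of t] last_le[of "Suc t"] by (intro divide_left_mono mult_pos_pos) auto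
    moreover have "G (Suc t) = G t + g t"
      using that by (simp add: G_def atLeastLessThanSuc add.commute)
    moreover have "g t \<bullet> (x t - u (Suc t)) - (norm (u (Suc t) - u t))\<^sup>2 / (2 * \<eta> t) \<le> \<delta> t"
      using that step xt metric_proj_in by (simp add: u_def G_def)
    ultimately show ?thesis
      by (simp add: F_def inner_add_left inner_diff_right)
  qed
  have "(\<Sum>t=1..T. g t \<bullet> x t - \<delta> t) \<le> (\<Sum>t=1..T. F (Suc t) (u (Suc t)) - F t (u t))"
    using potential_step by (rule sum_mono)
  also have "\<dots> = F (T + 1) (u (T + 1)) - F 1 (u 1)"
    using sum_Suc_diff[of 1 T "\<lambda>t. F t (u t)"] by simp
  also have "\<dots> \<le> F (T + 1) z"
  proof -
    have "0 \<le> F 1 (u 1)"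
      using last_le[of 1] rates(2) by (simp add: F_def G_def)
    moreover have "F (T + 1) (u (T + 1)) + (norm (z - u (T + 1)))\<^sup>2 / (2 * \<eta> (T + 1)) \<le> F (T + 1) z"
      using \<open>z \<in> C\<close> by (intro growth) auto
    moreover have "0 \<le> (norm (z - u (T + 1)))\<^sup>2 / (2 * \<eta> (T + 1))"
      using rates(2) by simp
    ultimately show ?thesis
      by linarith
  qed
  also have "\<dots> = (\<Sum>t=1..T. g t \<bullet> z) + (norm (z - a))\<^sup>2 / (2 * \<eta> (T + 1))"
    by (simp add: F_def G_def inner_sum_left atLeastLessThanSuc_atLeastAtMost)
  finally show ?thesis
    by (simp add: inner_diff_right sum_subtractf)
qed

lemma weighted_dual_averaging_linear_regret_le:
  fixes g x xt :: "nat \<Rightarrow> 'a" and \<theta> \<delta> :: "nat \<Rightarrow> real"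
  assumes weights: "0 < \<theta> 1" "\<forall>t\<in>{1..<T}. \<theta> t \<le> \<theta> (Suc t)"
    and xt: "\<forall>t\<in>{1..T}. xt t = metric_proj C (a - (\<Sum>i\<in>{1..<t}. \<theta> i *\<^sub>R g i))"
    and step: "\<forall>t\<in>{1..T}. \<forall>w\<in>C. g t \<bullet> (x t - w) - (norm (w - xt t))\<^sup>2 / (2 * \<theta> t) \<le> \<delta> t"
    and "z \<in> C"
  shows "(\<Sum>t=1..T. g t \<bullet> (x t - z)) \<le> (norm (z - a))\<^sup>2 / (2 * \<theta> 1) + (\<Sum>t=1..T. \<delta> t)"
proof -
  have pos: "0 < \<theta> t" if "1 \<le> t" "t \<le> T" for t
    using weight_ge_first[OF weights(2), of t] weights(1) that by auto
  define b where "b t = \<theta> t * (g t \<bullet> (x t - z) - \<delta> t)" for t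
  have "(\<Sum>t=1..s. b t) \<le> (norm (z - a))\<^sup>2 / 2" if "s \<le> T" for s
  proof -
    have "(\<Sum>t=1..s. (\<theta> t *\<^sub>R g t) \<bullet> (x t - z)) \<le> (norm (z - a))\<^sup>2 / (2 * 1) + (\<Sum>t=1..s. \<theta> t * \<delta> t)"
    proof (rule dual_averaging_linear_regret_le[where \<eta> = "\<lambda>_. 1"])
      show "\<forall>t\<in>{1..s}. xt t = metric_proj C (a - 1 *\<^sub>R (\<Sum>i\<in>{1..<t}. \<theta> i *\<^sub>R g i))"
        using xt that by simp
      show "\<forall>t\<in>{1..s}. \<forall>w\<in>C. (\<theta> t *\<^sub>R g t) \<bullet> (x t - w) - (norm (w - xt t))\<^sup>2 / (2 * 1) \<le> \<theta> t * \<delta> t"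
      proof (intro ballI)
        fix t w assume "t \<in> {1..s}" "w \<in> C"
        then have "0 < \<theta> t" "g t \<bullet> (x t - w) - (norm (w - xt t))\<^sup>2 / (2 * \<theta> t) \<le> \<delta> t"
          using pos step that by auto
        then show "(\<theta> t *\<^sub>R g t) \<bullet> (x t - w) - (norm (w - xt t))\<^sup>2 / (2 * 1) \<le> \<theta> t * \<delta> t"
          by (simp add: field_simps)
      qed
    qed (use \<open>z \<in> C\<close> in auto)
    moreover have "(\<Sum>t=1..s. b t) = (\<Sum>t=1..s. (\<theta> t *\<^sub>R g t) \<bullet> (x t - z)) - (\<Sum>t=1..s. \<theta> t * \<delta> t)"
      by (simp add: b_def right_diff_distrib sum_subtractf)
    ultimately show ?thesis
      by simp
  qed
  then have "(\<Sum>t=1..T. (1 / \<theta> t) * b t) \<le> (1 / \<theta> 1) * ((norm (z - a))\<^sup>2 / 2)"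
    using pos weights by (intro weighted_sum_le_of_prefix_sums_le) (auto simp: frac_le intro: less_imp_le)
  moreover have "(\<Sum>t=1..T. (1 / \<theta> t) * b t) = (\<Sum>t=1..T. g t \<bullet> (x t - z) - \<delta> t)"
  proof (rule sum.cong)
    fix t assume "t \<in> {1..T}"
    then have "\<theta> t \<noteq> 0"
      using pos by fastforce
    then show "(1 / \<theta> t) * b t = g t \<bullet> (x t - z) - \<delta> t"
      by (simp add: b_def)
  qed simp
  ultimately show ?thesis
    by (simp add: sum_subtractf)
qed

lemma regret_le_decreasing_rates:
  fixes \<phi> :: "nat \<Rightarrow> 'a \<Rightarrow> ereal" and x xt xs xh :: "nat \<Rightarrow> 'a" and \<eta> :: "nat \<Rightarrow> real"
  assumes subgrad: "\<And>t y. t \<in> {1..T} \<Longrightarrow> y \<in> C \<Longrightarrow> subdiff (\<phi> t) y \<noteq> {}"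
    and rates: "\<forall>t\<in>{1..T}. \<eta> (Suc t) \<le> \<eta> t" "0 < \<eta> (T + 1)"
    and play: "\<forall>t\<in>{1..T}. xt t = metric_proj C (a - \<eta> t *\<^sub>R (\<Sum>i\<in>{1..<t}. xs i))
                     \<and> x t = metric_proj C (xt t - \<eta> t *\<^sub>R xh t)
                     \<and> xs t \<in> subdiff (\<phi> t) (x t)"
    and "z \<in> C"
  shows "regret T \<phi> x z \<le> (norm (z - a))\<^sup>2 / (2 * \<eta> (T + 1))
         + (\<Sum>t=1..T. Qstar (diam_e C) (\<eta> t * norm (xs t - xh t)) / \<eta> t)
         - (\<Sum>t=1..T. (norm (x t - xt t))\<^sup>2 / (2 * \<eta> t))
      \<and>
      regret T \<phi> x z \<le> (norm (z - a))\<^sup>2 / (2 * \<eta> (T + 1))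
         + (\<Sum>t=1..T. Phi (diam_e C) (\<eta> t) (xs t) (xh t) / \<eta> t)
         - (\<Sum>t=1..T. (norm (metric_proj C (xt t - \<eta> t *\<^sub>R yhat (xs t) (xh t)) - xt t))\<^sup>2
                         / (2 * \<eta> t))"
proof -
  have pos: "0 < \<eta> t" if "t \<in> {1..T}" for t
    using rate_ge_last[OF rates(1), of t] rates(2) that by auto
  have "regret T \<phi> x z \<le> (\<Sum>t=1..T. xs t \<bullet> (x t - z))"
    using play subgrad \<open>z \<in> C\<close> by (intro regret_le_linearized) auto
  moreover have "(\<Sum>t=1..T. xs t \<bullet> (x t - z)) \<le> (norm (z - a))\<^sup>2 / (2 * \<eta> (T + 1))
      + (\<Sum>t=1..T. Qstar (diam_e C) (\<eta> t * norm (xs t - xh t)) / \<eta> t - (norm (x t - xt t))\<^sup>2 / (2 * \<eta> t))"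
    using rates play pos \<open>z \<in> C\<close>
    by (intro dual_averaging_linear_regret_le) (auto intro!: optimistic_step_le_Qstar)
  moreover have "(\<Sum>t=1..T. xs t \<bullet> (x t - z)) \<le> (norm (z - a))\<^sup>2 / (2 * \<eta> (T + 1))
      + (\<Sum>t=1..T. Phi (diam_e C) (\<eta> t) (xs t) (xh t) / \<eta> t
          - (norm (metric_proj C (xt t - \<eta> t *\<^sub>R yhat (xs t) (xh t)) - xt t))\<^sup>2 / (2 * \<eta> t))"
    using rates play pos \<open>z \<in> C\<close>
    by (intro dual_averaging_linear_regret_le) (auto intro!: optimistic_step_le_Phi)
  ultimately show ?thesis
    by (simp add: sum_subtractf)
qed

lemma regret_le_increasing_weights:
  fixes \<phi> :: "nat \<Rightarrow> 'a \<Rightarrow> ereal" and x xt xs xh :: "nat \<Rightarrow> 'a" and \<theta> :: "nat \<Rightarrow> real"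
  assumes subgrad: "\<And>t y. t \<in> {1..T} \<Longrightarrow> y \<in> C \<Longrightarrow> subdiff (\<phi> t) y \<noteq> {}"
    and weights: "0 < \<theta> 1" "\<forall>t\<in>{1..<T}. \<theta> t \<le> \<theta> (Suc t)"
    and play: "\<forall>t\<in>{1..T}. xt t = metric_proj C (a - (\<Sum>i\<in>{1..<t}. \<theta> i *\<^sub>R xs i))
                     \<and> x t = metric_proj C (xt t - \<theta> t *\<^sub>R xh t)
                     \<and> xs t \<in> subdiff (\<phi> t) (x t)"
    and "z \<in> C"
  shows "regret T \<phi> x z \<le> (norm (z - a))\<^sup>2 / (2 * \<theta> 1)
         + (\<Sum>t=1..T. Qstar (diam_e C) (\<theta> t * norm (xs t - xh t)) / \<theta> t)
         - (\<Sum>t=1..T. (norm (x t - xt t))\<^sup>2 / (2 * \<theta> t))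
      \<and>
      regret T \<phi> x z \<le> (norm (z - a))\<^sup>2 / (2 * \<theta> 1)
         + (\<Sum>t=1..T. Phi (diam_e C) (\<theta> t) (xs t) (xh t) / \<theta> t)
         - (\<Sum>t=1..T. (norm (metric_proj C (xt t - \<theta> t *\<^sub>R yhat (xs t) (xh t)) - xt t))\<^sup>2
                         / (2 * \<theta> t))"
proof -
  have pos: "0 < \<theta> t" if "t \<in> {1..T}" for t
    using weight_ge_first[OF weights(2), of t] weights(1) that by auto
  have "regret T \<phi> x z \<le> (\<Sum>t=1..T. xs t \<bullet> (x t - z))"
    using play subgrad \<open>z \<in> C\<close> by (intro regret_le_linearized) auto
  moreover have "(\<Sum>t=1..T. xs t \<bullet> (x t - z)) \<le> (norm (z - a))\<^sup>2 / (2 * \<theta> 1)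
      + (\<Sum>t=1..T. Qstar (diam_e C) (\<theta> t * norm (xs t - xh t)) / \<theta> t - (norm (x t - xt t))\<^sup>2 / (2 * \<theta> t))"
    using weights play pos \<open>z \<in> C\<close>
    by (intro weighted_dual_averaging_linear_regret_le) (auto intro!: optimistic_step_le_Qstar)
  moreover have "(\<Sum>t=1..T. xs t \<bullet> (x t - z)) \<le> (norm (z - a))\<^sup>2 / (2 * \<theta> 1)
      + (\<Sum>t=1..T. Phi (diam_e C) (\<theta> t) (xs t) (xh t) / \<theta> t
          - (norm (metric_proj C (xt t - \<theta> t *\<^sub>R yhat (xs t) (xh t)) - xt t))\<^sup>2 / (2 * \<theta> t))"
    using weights play pos \<open>z \<in> C\<close>
    by (intro weighted_dual_averaging_linear_regret_le) (auto intro!: optimistic_step_le_Phi)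
  ultimately show ?thesis
    by (simp add: sum_subtractf)
qed

end

theorem corollary6:
  fixes C :: "'a::{real_inner,complete_space} set" and a :: 'a and T :: nat
    and \<phi> :: "nat \<Rightarrow> 'a \<Rightarrow> ereal" and xh :: "nat \<Rightarrow> 'a"
  assumes "C \<noteq> {}" and "closed C" and "convex C" and "a \<in> C"
    and "\<And>t. t \<in> {1..T} \<Longrightarrow> proper_fun (\<phi> t)"
    and "\<And>t x. t \<in> {1..T} \<Longrightarrow> x \<in> C \<Longrightarrow> subdiff (\<phi> t) x \<noteq> {}"
  shows
   "(\<forall>(\<eta>::nat \<Rightarrow> real) x xt xs z.
      (\<forall>t\<in>{1..T}. \<eta> (Suc t) \<le> \<eta> t) \<and> 0 < \<eta> (T + 1)
      \<and> (\<forall>t\<in>{1..T}. xt t = metric_proj C (a - \<eta> t *\<^sub>R (\<Sum>i\<in>{1..<t}. xs i))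
                     \<and> x t = metric_proj C (xt t - \<eta> t *\<^sub>R xh t)
                     \<and> xs t \<in> subdiff (\<phi> t) (x t))
      \<and> z \<in> C
      \<longrightarrow>
      regret T \<phi> x z \<le> (norm (z - a))\<^sup>2 / (2 * \<eta> (T + 1))
         + (\<Sum>t=1..T. Qstar (diam_e C) (\<eta> t * norm (xs t - xh t)) / \<eta> t)
         - (\<Sum>t=1..T. (norm (x t - xt t))\<^sup>2 / (2 * \<eta> t))
      \<and>
      regret T \<phi> x z \<le> (norm (z - a))\<^sup>2 / (2 * \<eta> (T + 1))
         + (\<Sum>t=1..T. Phi (diam_e C) (\<eta> t) (xs t) (xh t) / \<eta> t)
         - (\<Sum>t=1..T. (norm (metric_proj C (xt t - \<eta> t *\<^sub>R yhat (xs t) (xh t)) - xt t))\<^sup>2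
                         / (2 * \<eta> t)))
    \<and>
    (\<forall>(\<theta>::nat \<Rightarrow> real) x xt xs z.
      0 < \<theta> 1 \<and> (\<forall>t\<in>{1..<T}. \<theta> t \<le> \<theta> (Suc t))
      \<and> (\<forall>t\<in>{1..T}. xt t = metric_proj C (a - (\<Sum>i\<in>{1..<t}. \<theta> i *\<^sub>R xs i))
                     \<and> x t = metric_proj C (xt t - \<theta> t *\<^sub>R xh t)
                     \<and> xs t \<in> subdiff (\<phi> t) (x t))
      \<and> z \<in> C
      \<longrightarrow>
      regret T \<phi> x z \<le> (norm (z - a))\<^sup>2 / (2 * \<theta> 1)
         + (\<Sum>t=1..T. Qstar (diam_e C) (\<theta> t * norm (xs t - xh t)) / \<theta> t)
         - (\<Sum>t=1..T. (norm (x t - xt t))\<^sup>2 / (2 * \<theta> t))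
      \<and>
      regret T \<phi> x z \<le> (norm (z - a))\<^sup>2 / (2 * \<theta> 1)
         + (\<Sum>t=1..T. Phi (diam_e C) (\<theta> t) (xs t) (xh t) / \<theta> t)
         - (\<Sum>t=1..T. (norm (metric_proj C (xt t - \<theta> t *\<^sub>R yhat (xs t) (xh t)) - xt t))\<^sup>2
                         / (2 * \<theta> t)))"
  by (rule conjI; intro allI impI; elim conjE;
      rule regret_le_decreasing_rates[OF assms(2,3,1,6)] regret_le_increasing_weights[OF assms(2,3,1,6)];
      assumption)

end
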